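(* Assume $n>3t+2d$. In any execution of Algorithm 1, the mbrb-broadcast of an app-message by a correct process $p_i$ entails the sending of at most $2n^2$ implementation messages by correct processes.
   Context: System model. There are $n$ asynchronous processes $p_1,\dots,p_n$ with distinct known identities. Up to $t$ are Byzantine (arbitrary behavior); the rest are correct; $c$ is the number of correct processes. The network is fully connected, asynchronous, never corrupts/duplicates/creates messages; "broadcast $M$" sends $M$ to all $n$ processes (counting as $n$ sent imp-messages); a message adversary may suppress, per broadcast by a correct process, up to $d<c$ copies addressed to correct processes. Signatures are unforgeable and public keys are known. Algorithm 1 (code for $p_i$). Each process stores, for each triplet $(m,sn,j)$, a set of saved valid signatures of that triplet, at most one per signer. On $\mathrm{mbrb\_broadcast}(m,sn)$: $p_i$ saves its own signature of $(m,sn,i)$ and broadcasts $\mathrm{BUNDLE}(m,sn,i,S)$, $S$ the saved signatures for $(m,sn,i)$. On receiving $\mathrm{BUNDLE}(m,sn,j,sigs)$: if $p_i$ has not already mbrb-delivered some $(-,sn,j)$ and $sigs$ contains a valid signature of $(m,sn,j)$ by $p_j$, then: (1) save all new valid signatures of $(m,sn,j)$ in $sigs$; (2) if $p_i$ has not yet signed any $(-,sn,j)$, save its own signature of $(m,sn,j)$ and broadcast $\mathrm{BUNDLE}(m,sn,j,\text{all saved signatures for }(m,sn,j))$; (3) if strictly more than $\frac{n+t}{2}$ signatures for $(m,sn,j)$ are saved, broadcast $\mathrm{BUNDLE}(m,sn,j,\text{all saved signatures})$ and mbrb-deliver $(m,sn,j)$. *)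

theory Defs
  imports Main "HOL-Library.Multiset"
begin

datatype 'm bmsg = BUNDLE 'm nat nat "nat set"

fun bundle_tag :: "'m bmsg \<Rightarrow> nat \<times> nat" where
  "bundle_tag (BUNDLE m sn j S) = (sn, j)"

(* packet = (sender, destination, content) *)
type_synonym 'm packet = "nat \<times> nat \<times> 'm bmsg"

record 'm lstate =
  saved :: "'m \<times> nat \<times> nat \<Rightarrow> nat set"   (* saved valid signatures per triplet *)
  deliv :: "nat \<times> nat \<Rightarrow> 'm option"       (* mbrb-delivered (m,sn,j), indexed by (sn,j) *)

record 'm gstate =
  loc :: "nat \<Rightarrow> 'm lstate"
  net :: "'m packet multiset"
  sent :: "'m packet multiset"      (* log of every imp-message ever sent *)
  invoked :: "(nat \<times> nat) set"      (* (p,sn) pairs for which p invoked mbrb_broadcast *)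

definition procs :: "nat \<Rightarrow> nat set" where
  "procs n = {1..n}"

definition bcast :: "nat \<Rightarrow> nat \<Rightarrow> 'm bmsg \<Rightarrow> 'm packet multiset" where
  "bcast n p B = image_mset (\<lambda>q. (p, q, B)) (mset_set (procs n))"

definition has_signed :: "'m lstate \<Rightarrow> nat \<Rightarrow> nat \<Rightarrow> nat \<Rightarrow> bool" where
  "has_signed ls p sn j = (\<exists>m. p \<in> saved ls (m, sn, j))"

(* handler of Algorithm 1 at correct process p for a received BUNDLE;
   returns new local state and the list of bundles broadcast *)
definition recv_handler ::
  "nat \<Rightarrow> nat \<Rightarrow> nat \<Rightarrow> 'm bmsg \<Rightarrow> 'm lstate \<Rightarrow> 'm lstate \<times> 'm bmsg list" where
  "recv_handler n t p B ls = (case B of BUNDLE m sn j S \<Rightarrow>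
     if deliv ls (sn, j) \<noteq> None \<or> j \<notin> S \<inter> procs n then (ls, [])
     else
       (let sv1 = saved ls (m, sn, j) \<union> (S \<inter> procs n);
            sv2 = (if has_signed ls p sn j then sv1 else insert p sv1);
            out2 = (if has_signed ls p sn j then [] else [BUNDLE m sn j sv2]);
            ls2 = ls\<lparr>saved := (saved ls)((m, sn, j) := sv2)\<rparr>
        in if 2 * card sv2 > n + t
           then (ls2\<lparr>deliv := (deliv ls2)((sn, j) := Some m)\<rparr>, out2 @ [BUNDLE m sn j sv2])
           else (ls2, out2)))"

definition init_state :: "'m gstate" where
  "init_state = \<lparr>loc = (\<lambda>_. \<lparr>saved = (\<lambda>_. {}), deliv = (\<lambda>_. None)\<rparr>),
                 net = {#}, sent = {#}, invoked = {}\<rparr>"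

inductive step :: "nat \<Rightarrow> nat \<Rightarrow> nat set \<Rightarrow> 'm gstate \<Rightarrow> 'm gstate \<Rightarrow> bool"
  for n t :: nat and Byz :: "nat set" where
  (* correct p invokes mbrb_broadcast(m,sn); sequence numbers are not reused *)
  mbrb_broadcast:
  "\<lbrakk> p \<in> procs n - Byz; (p, sn) \<notin> invoked s;
     sv = insert p (saved (loc s p) (m, sn, p)) \<rbrakk> \<Longrightarrow>
   step n t Byz s
     (s\<lparr>loc := (loc s)(p := (loc s p)\<lparr>saved := (saved (loc s p))((m, sn, p) := sv)\<rparr>),
        net := net s + bcast n p (BUNDLE m sn p sv),
        sent := sent s + bcast n p (BUNDLE m sn p sv),
        invoked := insert (p, sn) (invoked s)\<rparr>)"
| receive:
  "\<lbrakk> p \<in> procs n - Byz; (q, p, B) \<in># net s;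
     recv_handler n t p B (loc s p) = (ls', outs);
     Out = sum_list (map (bcast n p) outs) \<rbrakk> \<Longrightarrow>
   step n t Byz s
     (s\<lparr>loc := (loc s)(p := ls'),
        net := (net s - {#(q, p, B)#}) + Out,
        sent := sent s + Out\<rparr>)"
  (* a Byzantine process sends an arbitrary message, but cannot forge signatures of
     correct processes: it may only include signatures that their signers produced *)
| byz_send:
  "\<lbrakk> p \<in> Byz; q \<in> procs n;
     \<forall>r \<in> S - Byz. r \<in> saved (loc s r) (m, sn, j) \<rbrakk> \<Longrightarrow>
   step n t Byz s
     (s\<lparr>net := net s + {#(p, q, BUNDLE m sn j S)#},
        sent := sent s + {#(p, q, BUNDLE m sn j S)#}\<rparr>)"

definition reachable :: "nat \<Rightarrow> nat \<Rightarrow> nat set \<Rightarrow> 'm gstate \<Rightarrow> bool" where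
  "reachable n t Byz s = (step n t Byz)\<^sup>*\<^sup>* init_state s"

end

theory Submission
  imports Defs
begin

text \<open>
  A correct process broadcasts a bundle for the triplets of a fixed pair \<open>(sn, i)\<close> only at
  two moments: when it signs some \<open>(-, sn, i)\<close> for the first time and when it mbrb-delivers
  some \<open>(-, sn, i)\<close>; both happen at most once, since its own signature and its delivery record
  are never removed. Each broadcast is \<open>n\<close> imp-messages and there are at most \<open>n\<close> correct
  processes, whence \<open>2n\<^sup>2\<close>. The only subtle case is the initial broadcast by the sender \<open>i\<close>:
  it must not have signed \<open>(-, sn, i)\<close> before, which holds because a correct process only
  signs a triplet naming itself after receiving a bundle carrying its own signature, and
  unforgeability means such a bundle exists only after \<open>i\<close> invoked \<open>mbrb_broadcast\<close>.
\<close>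

lemma finite_procs [simp]: "finite (procs n)"
  by (simp add: procs_def)

lemma card_procs [simp]: "card (procs n) = n"
  by (simp add: procs_def)

lemma size_filter_mset_split_fst:
  assumes "finite A" and "\<forall>x\<in>#M. P x \<longrightarrow> fst x \<in> A"
  shows "size (filter_mset P M) = (\<Sum>a\<in>A. size (filter_mset (\<lambda>x. P x \<and> fst x = a) M))"
  using assms(2)
proof (induction M)
  case (add x M)
  have "(\<Sum>a\<in>A. size (filter_mset (\<lambda>y. P y \<and> fst y = a) (add_mset x M)))
      = (\<Sum>a\<in>A. size (filter_mset (\<lambda>y. P y \<and> fst y = a) M)) + (\<Sum>a\<in>A. of_bool (P x \<and> fst x = a))"
    by (simp add: sum.distrib[symmetric] if_distrib of_bool_def cong: if_cong)
  then show ?case using add assms(1) by (simp add: of_bool_def sum.delta)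
qed simp

definition sent_by :: "nat \<Rightarrow> nat \<times> nat \<Rightarrow> 'm packet multiset \<Rightarrow> nat" where
  "sent_by p tag M = size (filter_mset (\<lambda>(src, dst, B). src = p \<and> bundle_tag B = tag) M)"

lemma sent_by_union [simp]: "sent_by p tag (M + N) = sent_by p tag M + sent_by p tag N"
  by (simp add: sent_by_def)

lemma sent_by_add_mset [simp]:
  "sent_by p tag (add_mset (q, r, B) M) =
     (if q = p \<and> bundle_tag B = tag then Suc (sent_by p tag M) else sent_by p tag M)"
  by (simp add: sent_by_def)

lemma sent_by_bcast:
  "sent_by p tag (bcast n q B) = (if q = p \<and> bundle_tag B = tag then n else 0)"
  by (simp add: sent_by_def bcast_def filter_mset_image_mset comp_def)

lemma sent_by_bcasts:
  "sent_by p tag (sum_list (map (bcast n q) Bs)) =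
     (if q = p then n * length (filter (\<lambda>B. bundle_tag B = tag) Bs) else 0)"
  by (induction Bs) (auto simp: sent_by_bcast, simp add: sent_by_def)

lemma mem_bcast: "x \<in># bcast n p B \<longleftrightarrow> (\<exists>q\<in>procs n. x = (p, q, B))"
  by (auto simp: bcast_def)

definition broadcast_count :: "nat \<Rightarrow> nat \<Rightarrow> nat \<Rightarrow> 'm lstate \<Rightarrow> nat" where
  "broadcast_count p sn j ls = of_bool (has_signed ls p sn j) + of_bool (deliv ls (sn, j) \<noteq> None)"

lemma broadcast_count_le_2: "broadcast_count p sn j ls \<le> 2"
  by (simp add: broadcast_count_def)

definition lstate_le :: "'m lstate \<Rightarrow> 'm lstate \<Rightarrow> bool" where
  "lstate_le ls ls' \<longleftrightarrow>
     (\<forall>k. saved ls k \<subseteq> saved ls' k) \<and> (\<forall>k. deliv ls k \<noteq> None \<longrightarrow> deliv ls' k \<noteq> None)"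

lemma broadcast_count_mono:
  "lstate_le ls ls' \<Longrightarrow> broadcast_count p sn j ls \<le> broadcast_count p sn j ls'"
  unfolding broadcast_count_def lstate_le_def has_signed_def by (intro add_mono) (auto; blast)+

lemma lstate_le_refl [simp]: "lstate_le ls ls"
  by (simp add: lstate_le_def)

lemma lstate_le_saved: "lstate_le ls ls' \<Longrightarrow> x \<in> saved ls k \<Longrightarrow> x \<in> saved ls' k"
  unfolding lstate_le_def by blast

context
  fixes n t p m sn j S ls ls' outs
  assumes handler: "recv_handler n t p (BUNDLE m sn j S) ls = (ls', outs)"
begin

lemma recv_handler_mono: "lstate_le ls ls'"
  using handler by (auto simp: recv_handler_def Let_def lstate_le_def split: if_splits)

lemma recv_handler_outputs: "B \<in> set outs \<Longrightarrow> B = BUNDLE m sn j (saved ls' (m, sn, j)) \<and> j \<in> S"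
  using handler by (auto simp: recv_handler_def Let_def split: if_splits)

lemma recv_handler_saved_changed: "saved ls' k \<noteq> saved ls k \<Longrightarrow> k = (m, sn, j) \<and> j \<in> S"
  using handler by (auto simp: recv_handler_def Let_def split: if_splits)

lemma recv_handler_broadcast_count:
  "length outs + broadcast_count p sn j ls \<le> broadcast_count p sn j ls'"
  using handler
  by (auto simp: recv_handler_def Let_def broadcast_count_def has_signed_def split: if_splits)

end

lemma step_lstate_le: "step n t Byz s s' \<Longrightarrow> lstate_le (loc s r) (loc s' r)"
proof (induction rule: step.induct)
  case (receive p q B s ls' outs Out)
  obtain m sn j S where "B = BUNDLE m sn j S" by (cases B)
  then show ?case using receive by (auto intro: recv_handler_mono)
qed (auto simp: lstate_le_def)

lemma reachable_invariant:
  assumes "reachable n t Byz s" and "P init_state"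
    and "\<And>s s'. reachable n t Byz s \<Longrightarrow> step n t Byz s s' \<Longrightarrow> P s \<Longrightarrow> P s'"
  shows "P s"
  using assms(1) unfolding reachable_def
  by (induction rule: rtranclp_induct) (auto intro: assms(2) assms(3)[unfolded reachable_def])

lemma step_saved_mono: "step n t Byz s s' \<Longrightarrow> x \<in> saved (loc s r) k \<Longrightarrow> x \<in> saved (loc s' r) k"
  using step_lstate_le lstate_le_saved by blast

lemma step_broadcast_count_mono:
  "step n t Byz s s' \<Longrightarrow> broadcast_count p sn j (loc s p) \<le> broadcast_count p sn j (loc s' p)"
  using step_lstate_le broadcast_count_mono by blast

definition net_signatures_genuine :: "nat \<Rightarrow> nat set \<Rightarrow> 'm gstate \<Rightarrow> bool" where
  "net_signatures_genuine n Byz s \<longleftrightarrow>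
     (\<forall>q r m sn j S. (q, r, BUNDLE m sn j S) \<in># net s \<longrightarrow> j \<in> procs n - Byz \<longrightarrow> j \<in> S \<longrightarrow>
        j \<in> saved (loc s j) (m, sn, j))"

lemma net_signatures_genuine_step:
  assumes step: "step n t Byz s s'" and genuine: "net_signatures_genuine n Byz s"
  shows "net_signatures_genuine n Byz s'"
  using step
proof cases
  case (mbrb_broadcast p sn sv m)
  then show ?thesis
    using genuine step_saved_mono[OF step] by (fastforce simp: net_signatures_genuine_def mem_bcast)
next
  case (receive p q B ls' outs Out)
  obtain m sn j S where B: "B = BUNDLE m sn j S" by (cases B)
  with receive have handler: "recv_handler n t p (BUNDLE m sn j S) (loc s p) = (ls', outs)"
    by simp
  have "j' \<in> saved (loc s' j') (m', sn', j')"
    if pkt: "(q', r, BUNDLE m' sn' j' S') \<in># net s'" and j': "j' \<in> procs n - Byz" "j' \<in> S'"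
    for q' r m' sn' j' S'
  proof (cases "(q', r, BUNDLE m' sn' j' S') \<in># net s")
    case True
    then show ?thesis using genuine j' step_saved_mono[OF step]
      by (auto simp: net_signatures_genuine_def)
  next
    case False
    with pkt receive have "(q', r, BUNDLE m' sn' j' S') \<in># Out" by (auto dest: in_diffD)
    with receive have "m' = m \<and> sn' = sn \<and> j' = j \<and> j \<in> S"
      using recv_handler_outputs[OF handler] by (auto simp: mem_bcast)
    moreover have "(q, p, BUNDLE m sn j S) \<in># net s" using receive B by simp
    ultimately show ?thesis using genuine j' step_saved_mono[OF step]
      by (auto simp: net_signatures_genuine_def)
  qed
  then show ?thesis by (auto simp: net_signatures_genuine_def)
next
  case (byz_send p q S m sn j)
  then show ?thesis using genuine by (auto simp: net_signatures_genuine_def)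
qed

definition own_signatures_invoked :: "nat \<Rightarrow> nat set \<Rightarrow> 'm gstate \<Rightarrow> bool" where
  "own_signatures_invoked n Byz s \<longleftrightarrow>
     (\<forall>j m sn. j \<in> procs n - Byz \<longrightarrow> j \<in> saved (loc s j) (m, sn, j) \<longrightarrow> (j, sn) \<in> invoked s)"

lemma own_signatures_invoked_step:
  assumes step: "step n t Byz s s'"
    and genuine: "net_signatures_genuine n Byz s" and invoked: "own_signatures_invoked n Byz s"
  shows "own_signatures_invoked n Byz s'"
  using step
proof cases
  case (mbrb_broadcast p sn sv m)
  then show ?thesis using invoked by (auto simp: own_signatures_invoked_def)
next
  case (receive p q B ls' outs Out)
  obtain m sn j S where B: "B = BUNDLE m sn j S" by (cases B)
  with receive have handler: "recv_handler n t p (BUNDLE m sn j S) (loc s p) = (ls', outs)"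
    by simp
  have "(j', sn') \<in> invoked s"
    if j': "j' \<in> procs n - Byz" and signed: "j' \<in> saved (loc s' j') (m', sn', j')" for j' m' sn'
  proof (cases "j' = p \<and> saved ls' (m', sn', j') \<noteq> saved (loc s p) (m', sn', j')")
    case True
    then have "(m', sn', j') = (m, sn, j)" and "j \<in> S"
      using recv_handler_saved_changed[OF handler] by auto
    moreover have "(q, p, BUNDLE m sn j S) \<in># net s" using receive B by simp
    ultimately have "j' \<in> saved (loc s j') (m', sn', j')"
      using genuine j' by (auto simp: net_signatures_genuine_def)
    then show ?thesis using invoked j' by (auto simp: own_signatures_invoked_def)
  next
    case False
    then have "j' \<in> saved (loc s j') (m', sn', j')" using signed receive by (auto split: if_splits)
    then show ?thesis using invoked j' by (auto simp: own_signatures_invoked_def)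
  qed
  then show ?thesis using receive by (auto simp: own_signatures_invoked_def)
next
  case (byz_send p q S m sn j)
  then show ?thesis using invoked by (auto simp: own_signatures_invoked_def)
qed

definition senders_are_processes :: "nat \<Rightarrow> nat set \<Rightarrow> 'm gstate \<Rightarrow> bool" where
  "senders_are_processes n Byz s \<longleftrightarrow> (\<forall>x\<in>#sent s. fst x \<in> Byz \<union> procs n)"

lemma senders_are_processes_step:
  "step n t Byz s s' \<Longrightarrow> senders_are_processes n Byz s \<Longrightarrow> senders_are_processes n Byz s'"
  by (induction rule: step.induct) (auto simp: senders_are_processes_def mem_bcast)

definition sent_within_broadcast_count :: "nat \<Rightarrow> nat set \<Rightarrow> nat \<Rightarrow> nat \<Rightarrow> 'm gstate \<Rightarrow> bool" where
  "sent_within_broadcast_count n Byz sn j s \<longleftrightarrow>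
     (\<forall>p\<in>procs n - Byz. sent_by p (sn, j) (sent s) \<le> n * broadcast_count p sn j (loc s p))"

lemma sent_within_broadcast_count_step:
  assumes step: "step n t Byz s s'"
    and invoked: "own_signatures_invoked n Byz s"
    and bound: "sent_within_broadcast_count n Byz sn j s"
  shows "sent_within_broadcast_count n Byz sn j s'"
  unfolding sent_within_broadcast_count_def
proof
  fix r assume r: "r \<in> procs n - Byz"
  have old: "sent_by r (sn, j) (sent s) \<le> n * broadcast_count r sn j (loc s r)"
    using bound r by (simp add: sent_within_broadcast_count_def)
  have grows: "n * broadcast_count r sn j (loc s r) \<le> n * broadcast_count r sn j (loc s' r)"
    using step_broadcast_count_mono[OF step] by (rule mult_le_mono2)
  from step show "sent_by r (sn, j) (sent s') \<le> n * broadcast_count r sn j (loc s' r)"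
  proof cases
    case (mbrb_broadcast p sn' sv m)
    show ?thesis
    proof (cases "r = p \<and> (sn', p) = (sn, j)")
      case True
      with mbrb_broadcast invoked have "\<not> has_signed (loc s r) r sn j"
        by (auto simp: has_signed_def own_signatures_invoked_def)
      moreover have "has_signed (loc s' r) r sn j"
        using True mbrb_broadcast by (auto simp: has_signed_def)
      ultimately have "broadcast_count r sn j (loc s' r) = broadcast_count r sn j (loc s r) + 1"
        using True mbrb_broadcast by (simp add: broadcast_count_def)
      moreover have "sent_by r (sn, j) (sent s') = sent_by r (sn, j) (sent s) + n"
        using True mbrb_broadcast by (simp add: sent_by_bcast)
      ultimately show ?thesis using old by simp
    next
      case False
      then have "sent_by r (sn, j) (sent s') = sent_by r (sn, j) (sent s)"
        using mbrb_broadcast by (auto simp: sent_by_bcast)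
      then show ?thesis using old grows by linarith
    qed
  next
    case (receive p q B ls' outs Out)
    obtain m sn' j' S where B: "B = BUNDLE m sn' j' S" by (cases B)
    with receive have handler: "recv_handler n t p (BUNDLE m sn' j' S) (loc s p) = (ls', outs)"
      by simp
    show ?thesis
    proof (cases "r = p \<and> (sn', j') = (sn, j)")
      case True
      have "filter (\<lambda>B. bundle_tag B = (sn, j)) outs = outs"
        using True by (intro filter_True) (auto dest!: recv_handler_outputs[OF handler])
      then have "sent_by r (sn, j) (sent s') = sent_by r (sn, j) (sent s) + n * length outs"
        using True receive by (simp add: sent_by_bcasts)
      moreover have "n * length outs + n * broadcast_count r sn j (loc s r)
          \<le> n * broadcast_count r sn j (loc s' r)"
        using True receive recv_handler_broadcast_count[OF handler]
        by (simp flip: add_mult_distrib2)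
      ultimately show ?thesis using old by linarith
    next
      case False
      then have "r \<noteq> p \<or> filter (\<lambda>B. bundle_tag B = (sn, j)) outs = []"
        by (cases "r = p") (auto intro!: filter_False dest!: recv_handler_outputs[OF handler])
      then have "sent_by r (sn, j) (sent s') = sent_by r (sn, j) (sent s)"
        using receive by (auto simp: sent_by_bcasts)
      then show ?thesis using old grows by linarith
    qed
  next
    case (byz_send p q S m sn' j')
    then show ?thesis using old r by auto
  qed
qed

lemma reachable_net_signatures_genuine:
  "reachable n t Byz s \<Longrightarrow> net_signatures_genuine n Byz s"
  by (erule reachable_invariant)
    (simp add: net_signatures_genuine_def init_state_def, blast intro: net_signatures_genuine_step)

lemma reachable_own_signatures_invoked:
  "reachable n t Byz s \<Longrightarrow> own_signatures_invoked n Byz s"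
  by (erule reachable_invariant)
    (simp add: own_signatures_invoked_def init_state_def,
     blast intro: own_signatures_invoked_step reachable_net_signatures_genuine)

lemma reachable_senders_are_processes:
  "reachable n t Byz s \<Longrightarrow> senders_are_processes n Byz s"
  by (erule reachable_invariant)
    (simp add: senders_are_processes_def init_state_def, blast intro: senders_are_processes_step)

lemma reachable_sent_within_broadcast_count:
  "reachable n t Byz s \<Longrightarrow> sent_within_broadcast_count n Byz sn j s"
  by (erule reachable_invariant)
    (simp add: sent_within_broadcast_count_def init_state_def sent_by_def,
     blast intro: sent_within_broadcast_count_step reachable_own_signatures_invoked)

lemma reachable_sent_by_correct_le:
  assumes "reachable n t Byz s" and "p \<in> procs n - Byz"
  shows "sent_by p (sn, j) (sent s) \<le> 2 * n"
proof -
  have "sent_by p (sn, j) (sent s) \<le> n * broadcast_count p sn j (loc s p)"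
    using reachable_sent_within_broadcast_count[OF assms(1)] assms(2)
    by (simp add: sent_within_broadcast_count_def)
  also have "\<dots> \<le> n * 2"
    by (rule mult_le_mono2) (rule broadcast_count_le_2)
  finally show ?thesis by simp
qed

lemma reachable_size_sent_correct:
  assumes "reachable n t Byz s"
  shows "size (filter_mset (\<lambda>(src, dst, B). src \<notin> Byz \<and> bundle_tag B = tag) (sent s))
           = (\<Sum>p\<in>procs n - Byz. sent_by p tag (sent s))"
proof -
  let ?P = "\<lambda>(src, dst, B). src \<notin> Byz \<and> bundle_tag B = tag"
  have "\<forall>x\<in>#sent s. ?P x \<longrightarrow> fst x \<in> procs n - Byz"
    using reachable_senders_are_processes[OF assms] by (auto simp: senders_are_processes_def)
  then have "size (filter_mset ?P (sent s))
      = (\<Sum>p\<in>procs n - Byz. size (filter_mset (\<lambda>x. ?P x \<and> fst x = p) (sent s)))"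
    by (intro size_filter_mset_split_fst) auto
  also have "\<dots> = (\<Sum>p\<in>procs n - Byz. sent_by p tag (sent s))"
    unfolding sent_by_def by (intro sum.cong refl arg_cong[where f = size] filter_mset_cong) auto
  finally show ?thesis .
qed

theorem mainTheorem11:
  fixes n t d :: nat and Byz :: "nat set" and s :: "'m gstate" and i sn :: nat
  assumes "n > 3 * t + 2 * d"
    and "Byz \<subseteq> procs n" and "card Byz \<le> t"
    and "d < n - card Byz"
    and "i \<in> procs n - Byz"
    and "reachable n t Byz s"
  shows "size (filter_mset (\<lambda>(src, dst, B). src \<notin> Byz \<and> bundle_tag B = (sn, i)) (sent s))
           \<le> 2 * n ^ 2"
proof -
  have "size (filter_mset (\<lambda>(src, dst, B). src \<notin> Byz \<and> bundle_tag B = (sn, i)) (sent s))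
      = (\<Sum>p\<in>procs n - Byz. sent_by p (sn, i) (sent s))"
    using assms(6) by (rule reachable_size_sent_correct)
  also have "\<dots> \<le> (\<Sum>p\<in>procs n - Byz. 2 * n)"
    using assms(6) by (intro sum_mono reachable_sent_by_correct_le)
  also have "\<dots> = 2 * n * card (procs n - Byz)"
    by simp
  also have "\<dots> \<le> 2 * n * n"
    using card_mono[of "procs n" "procs n - Byz"] by (intro mult_le_mono2) auto
  finally show ?thesis by (simp add: power2_eq_square)
qed

end
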